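(* Let $K$ be a field and $P$ an arbitrary poset. An element $\alpha\in FI(P)$ is regular (i.e. there exists $\chi\in FI(P)$ with $\alpha\chi\alpha=\alpha$) if and only if there exist a diagonal idempotent $\varepsilon\in FI(P)$ and invertible elements $\beta,\gamma\in FI(P)$ such that $\alpha=\beta\varepsilon\gamma$.
   Context: $K$ is a field, $P$ an arbitrary poset. $I(P)$ is the set of functions $\alpha$ assigning to each pair $x\le y$ in $P$ a value $\alpha(x,y)\in K$. An element $\alpha\in I(P)$ is a finitary series if for all $x<y$ in $P$ there are only finitely many pairs $(u,v)$ with $x\le u<v\le y$ and $\alpha(u,v)\neq0$; $FI(P)$ is the set of finitary series. $FI(P)$ is an associative $K$-algebra under pointwise addition and convolution $(\alpha\beta)(x,y)=\sum_{x\le z\le y}\alpha(x,z)\beta(z,y)$, with identity $\delta$ given by $\delta(x,y)=1$ if $x=y$ and $0$ otherwise. An element $\alpha\in FI(P)$ is diagonal if $\alpha(x,y)=0$ whenever $x\neq y$; a diagonal element is idempotent iff each $\alpha(x,x)\in\{0,1\}$. *)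

theory Defs
  imports Main
begin

text \<open>Elements of I(P) are represented as functions p => p => k which vanish
  off the relation x <= y.  The poset P is the type 'p of class order, K is a
  field 'k.\<close>

definition finitary :: "('p::order \<Rightarrow> 'p \<Rightarrow> 'k::field) \<Rightarrow> bool" where
  "finitary \<alpha> \<longleftrightarrow>
     (\<forall>x y. x < y \<longrightarrow> finite {(u, v). x \<le> u \<and> u < v \<and> v \<le> y \<and> \<alpha> u v \<noteq> 0})"

definition FI :: "('p::order \<Rightarrow> 'p \<Rightarrow> 'k::field) set" where
  "FI = {\<alpha>. (\<forall>x y. \<not> x \<le> y \<longrightarrow> \<alpha> x y = 0) \<and> finitary \<alpha>}"

text \<open>Convolution. For finitary series the sum has only finitely many nonzero
  terms; we sum over exactly those.\<close>
definition conv :: "('p::order \<Rightarrow> 'p \<Rightarrow> 'k::field) \<Rightarrow> ('p \<Rightarrow> 'p \<Rightarrow> 'k) \<Rightarrow> 'p \<Rightarrow> 'p \<Rightarrow> 'k" where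
  "conv \<alpha> \<beta> x y =
     (if x \<le> y then (\<Sum>z\<in>{z. x \<le> z \<and> z \<le> y \<and> \<alpha> x z * \<beta> z y \<noteq> 0}. \<alpha> x z * \<beta> z y) else 0)"

definition delta :: "'p::order \<Rightarrow> 'p \<Rightarrow> 'k::field" where
  "delta x y = (if x = y then 1 else 0)"

definition regular_FI :: "('p::order \<Rightarrow> 'p \<Rightarrow> 'k::field) \<Rightarrow> bool" where
  "regular_FI \<alpha> \<longleftrightarrow> (\<exists>\<chi>\<in>FI. conv (conv \<alpha> \<chi>) \<alpha> = \<alpha>)"

definition invertible_FI :: "('p::order \<Rightarrow> 'p \<Rightarrow> 'k::field) \<Rightarrow> bool" where
  "invertible_FI \<beta> \<longleftrightarrow> \<beta> \<in> FI \<and> (\<exists>\<beta>'\<in>FI. conv \<beta> \<beta>' = delta \<and> conv \<beta>' \<beta> = delta)"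

definition diagonal :: "('p::order \<Rightarrow> 'p \<Rightarrow> 'k::field) \<Rightarrow> bool" where
  "diagonal \<alpha> \<longleftrightarrow> (\<forall>x y. x \<noteq> y \<longrightarrow> \<alpha> x y = 0)"

definition idempotent_FI :: "('p::order \<Rightarrow> 'p \<Rightarrow> 'k::field) \<Rightarrow> bool" where
  "idempotent_FI \<alpha> \<longleftrightarrow> conv \<alpha> \<alpha> = \<alpha>"

end

theory Submission
  imports Defs
begin

(* If \<alpha>\<chi>\<alpha> = \<alpha>, then \<phi> = \<chi>\<alpha> is idempotent and \<alpha> = (\<alpha> + 1 - \<phi>) \<phi>.  The first
   factor is a unit: its diagonal entries are \<alpha>(x,x) \<noteq> 0 or 1, and a finitary series
   with nonzero diagonal is invertible.  The idempotent \<phi> has diagonal entries in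
   {0,1}; with \<epsilon> the diagonal series carrying them, \<nu> = \<phi>\<epsilon> + (1-\<phi>)(1-\<epsilon>) has
   diagonal 1, hence is a unit, and \<phi>\<nu> = \<nu>\<epsilon>.  So \<alpha> = (\<alpha> + 1 - \<phi>) \<nu> \<epsilon> \<nu>\<inverse>.
   Conversely \<beta>\<epsilon>\<gamma> has the inner inverse \<gamma>\<inverse>\<epsilon>\<beta>\<inverse>. *)


section \<open>Ring-theoretic identities\<close>

definition has_inverse :: "'a::monoid_mult \<Rightarrow> bool" where
  "has_inverse b \<longleftrightarrow> (\<exists>b'. b * b' = 1 \<and> b' * b = 1)"

lemma has_inverse_mult:
  assumes "has_inverse a" "has_inverse b"
  shows "has_inverse (a * b)"
proof -
  obtain a' b' where "a * a' = 1" "a' * a = 1" "b * b' = 1" "b' * b = 1"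
    using assms unfolding has_inverse_def by blast
  then have "(a * b) * (b' * a') = 1" "(b' * a') * (a * b) = 1"
    by (metis mult.assoc mult_1_left)+
  then show ?thesis unfolding has_inverse_def by blast
qed

lemma has_inverse_if_right_inverses:
  assumes "a * b = 1" "b * c = 1"
  shows "has_inverse a"
proof -
  have "a = c" by (metis assms mult.assoc mult_1_left mult_1_right)
  then show ?thesis using assms unfolding has_inverse_def by blast
qed

lemma regular_if_unit_idempotent_unit:
  fixes b e g :: "'a::monoid_mult"
  assumes "has_inverse b" "has_inverse g" "e * e = e"
  shows "\<exists>x. (b * e * g) * x * (b * e * g) = b * e * g"
proof -
  obtain b' g' where inv: "b * b' = 1" "b' * b = 1" "g * g' = 1" "g' * g = 1"
    using assms(1,2) unfolding has_inverse_def by blast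
  have "(b * e * g) * (g' * e * b') * (b * e * g) = b * e * (g * g') * e * (b' * b) * e * g"
    by (simp add: mult.assoc)
  also have "\<dots> = b * (e * e) * e * g" using inv by (simp add: mult.assoc)
  also have "\<dots> = b * e * g" using assms(3) by (simp add: mult.assoc)
  finally show ?thesis by blast
qed

lemma regular_idempotent:
  fixes a x :: "'a::monoid_mult"
  assumes "a * x * a = a"
  shows "(x * a) * (x * a) = x * a"
  using assms by (metis mult.assoc)

lemma regular_factorisation:
  fixes a x :: "'a::ring_1"
  assumes "a * x * a = a"
  shows "a = (a + 1 - x * a) * (x * a)"
  using assms regular_idempotent[OF assms] by (simp add: algebra_simps mult.assoc)

text \<open>Two idempotents are intertwined by f e + (1-f)(1-e): both f V and V e equal f e.\<close>

lemma idempotent_intertwiner: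
  fixes f e :: "'a::ring_1"
  assumes "f * f = f" "e * e = e"
  shows "f * (f * e + (1 - f) * (1 - e)) = (f * e + (1 - f) * (1 - e)) * e"
proof -
  have "f * (f * e + (1 - f) * (1 - e)) = f * e"
    using assms(1) by (simp add: algebra_simps mult.assoc[symmetric])
  moreover have "(f * e + (1 - f) * (1 - e)) * e = f * e"
    using assms(2) by (simp add: algebra_simps mult.assoc)
  ultimately show ?thesis by simp
qed


section \<open>Supports of finitary series\<close>

definition nonzero_pairs :: "('p::order \<Rightarrow> 'p \<Rightarrow> 'k::field) \<Rightarrow> 'p \<Rightarrow> 'p \<Rightarrow> ('p \<times> 'p) set" where
  "nonzero_pairs \<alpha> x y = {(u, v). x \<le> u \<and> u < v \<and> v \<le> y \<and> \<alpha> u v \<noteq> 0}"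

definition support_points :: "('p::order \<Rightarrow> 'p \<Rightarrow> 'k::field) \<Rightarrow> 'p \<Rightarrow> 'p \<Rightarrow> 'p set" where
  "support_points \<alpha> x y = fst ` nonzero_pairs \<alpha> x y \<union> snd ` nonzero_pairs \<alpha> x y"

lemma FI_vanishes: "\<alpha> \<in> FI \<Longrightarrow> \<not> x \<le> y \<Longrightarrow> \<alpha> x y = 0"
  by (simp add: FI_def)

lemma finite_nonzero_pairs:
  assumes "\<alpha> \<in> FI"
  shows "finite (nonzero_pairs \<alpha> x y)"
proof (cases "x < y")
  case True
  then show ?thesis using assms by (simp add: FI_def finitary_def nonzero_pairs_def)
next
  case False
  then have "nonzero_pairs \<alpha> x y = {}"
    unfolding nonzero_pairs_def by (auto dest: le_less_trans less_le_trans)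
  then show ?thesis by simp
qed

lemma finite_support_points: "\<alpha> \<in> FI \<Longrightarrow> finite (support_points \<alpha> x y)"
  by (simp add: support_points_def finite_nonzero_pairs)

lemma support_pointsI:
  "x \<le> u \<Longrightarrow> u < v \<Longrightarrow> v \<le> y \<Longrightarrow> \<alpha> u v \<noteq> 0 \<Longrightarrow>
    u \<in> support_points \<alpha> x y \<and> v \<in> support_points \<alpha> x y"
  unfolding support_points_def nonzero_pairs_def by (force simp: image_iff)

lemma row_in_support:
  assumes "x \<le> w" "w \<le> y" "\<alpha> x w \<noteq> 0"
  shows "w \<in> insert x (support_points \<alpha> x y)"
proof (cases "w = x")
  case False
  then have "x < w" using assms(1) by (simp add: order.strict_iff_order)
  then show ?thesis using support_pointsI[of x x w y \<alpha>] assms by simp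
qed simp

lemma column_in_support:
  assumes "x \<le> z" "z \<le> y" "\<alpha> z y \<noteq> 0"
  shows "z \<in> insert y (support_points \<alpha> x y)"
proof (cases "z = y")
  case False
  then have "z < y" using assms(2) by (simp add: order.strict_iff_order)
  then show ?thesis using support_pointsI[of x z y y \<alpha>] assms by simp
qed simp

lemma finitaryI:
  assumes "\<And>x y. x < y \<Longrightarrow> \<exists>A. finite A \<and>
             (\<forall>u v. x \<le> u \<and> u < v \<and> v \<le> y \<and> \<alpha> u v \<noteq> 0 \<longrightarrow> u \<in> A \<and> v \<in> A)"
  shows "finitary \<alpha>"
  unfolding finitary_def
proof (intro allI impI)
  fix x y :: 'a
  assume "x < y"
  from assms[OF this] obtain A where "finite A"
    and A: "\<forall>u v. x \<le> u \<and> u < v \<and> v \<le> y \<and> \<alpha> u v \<noteq> 0 \<longrightarrow> u \<in> A \<and> v \<in> A"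
    by blast
  have "{(u, v). x \<le> u \<and> u < v \<and> v \<le> y \<and> \<alpha> u v \<noteq> 0} \<subseteq> A \<times> A"
    using A by auto
  then show "finite {(u, v). x \<le> u \<and> u < v \<and> v \<le> y \<and> \<alpha> u v \<noteq> 0}"
    using \<open>finite A\<close> finite_subset by blast
qed


section \<open>Convolution on finitary series\<close>

lemma conv_eq_sum:
  assumes "finite S" "x \<le> y"
    and "\<And>z. x \<le> z \<Longrightarrow> z \<le> y \<Longrightarrow> \<alpha> x z * \<beta> z y \<noteq> 0 \<Longrightarrow> z \<in> S"
  shows "conv \<alpha> \<beta> x y = (\<Sum>z\<in>S. if x \<le> z \<and> z \<le> y then \<alpha> x z * \<beta> z y else 0)"
proof -
  have "(\<Sum>z\<in>S. if x \<le> z \<and> z \<le> y then \<alpha> x z * \<beta> z y else 0)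
        = (\<Sum>z\<in>{z\<in>S. x \<le> z \<and> z \<le> y}. \<alpha> x z * \<beta> z y)"
    using assms(1) by (simp add: sum.inter_filter)
  also have "\<dots> = (\<Sum>z\<in>{z. x \<le> z \<and> z \<le> y \<and> \<alpha> x z * \<beta> z y \<noteq> 0}. \<alpha> x z * \<beta> z y)"
    by (rule sum.mono_neutral_right) (use assms in auto)
  finally show ?thesis using assms(2) by (simp add: conv_def)
qed

lemma conv_diag: "conv \<alpha> \<beta> x x = \<alpha> x x * \<beta> x x"
proof -
  have "conv \<alpha> \<beta> x x = (\<Sum>z\<in>{x}. if x \<le> z \<and> z \<le> x then \<alpha> x z * \<beta> z x else 0)"
    by (rule conv_eq_sum) (auto intro: order.antisym)
  then show ?thesis by simp
qed

lemma conv_nonzero_witness: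
  assumes "conv \<alpha> \<beta> u v \<noteq> 0"
  obtains z where "u \<le> z" "z \<le> v" "\<alpha> u z \<noteq> 0" "\<beta> z v \<noteq> 0"
proof -
  have "u \<le> v" using assms by (auto simp: conv_def split: if_splits)
  then have "(\<Sum>z\<in>{z. u \<le> z \<and> z \<le> v \<and> \<alpha> u z * \<beta> z v \<noteq> 0}. \<alpha> u z * \<beta> z v) \<noteq> 0"
    using assms by (simp add: conv_def)
  then show ?thesis
    by (rule sum.not_neutral_contains_not_neutral) (auto intro: that)
qed

lemma conv_FI:
  assumes "\<alpha> \<in> FI" "\<beta> \<in> FI"
  shows "conv \<alpha> \<beta> \<in> FI"
proof -
  have "finitary (conv \<alpha> \<beta>)"
  proof (rule finitaryI, intro exI conjI allI impI)
    fix x y :: 'a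
    show "finite (support_points \<alpha> x y \<union> support_points \<beta> x y)"
      using assms finite_support_points by blast
    fix u v
    assume h: "x \<le> u \<and> u < v \<and> v \<le> y \<and> conv \<alpha> \<beta> u v \<noteq> 0"
    then obtain z where z: "u \<le> z" "z \<le> v" "\<alpha> u z \<noteq> 0" "\<beta> z v \<noteq> 0"
      by (blast elim: conv_nonzero_witness)
    have zy: "z \<le> y" and xz: "x \<le> z" using h z order_trans by blast+
    show "u \<in> support_points \<alpha> x y \<union> support_points \<beta> x y"
    proof (cases "u = z")
      case True
      then show ?thesis using support_pointsI[of x u v y \<beta>] h z by auto
    next
      case False
      then show ?thesis using support_pointsI[of x u z y \<alpha>] h z zy by auto
    qed
    show "v \<in> support_points \<alpha> x y \<union> support_points \<beta> x y"
    proof (cases "z = v")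
      case True
      then show ?thesis using support_pointsI[of x u v y \<alpha>] h z by auto
    next
      case False
      then show ?thesis using support_pointsI[of x z v y \<beta>] h z xz by auto
    qed
  qed
  then show ?thesis by (simp add: FI_def conv_def)
qed

text \<open>Both bracketings of a triple product are the same double sum over
  paths x \<le> w \<le> z \<le> y, provided S traps the nonzero entries of the outer
  factors in row x and column y; the middle factor is arbitrary.\<close>

lemma conv_conv_left_double_sum:
  assumes S: "finite S" "x \<le> y"
    and row: "\<And>w. x \<le> w \<Longrightarrow> w \<le> y \<Longrightarrow> \<alpha> x w \<noteq> 0 \<Longrightarrow> w \<in> S"
    and col: "\<And>z. x \<le> z \<Longrightarrow> z \<le> y \<Longrightarrow> \<gamma> z y \<noteq> 0 \<Longrightarrow> z \<in> S"
  shows "conv (conv \<alpha> \<beta>) \<gamma> x y =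
    (\<Sum>z\<in>S. \<Sum>w\<in>S. if x \<le> w \<and> w \<le> z \<and> z \<le> y then \<alpha> x w * \<beta> w z * \<gamma> z y else 0)"
proof -
  have "conv (conv \<alpha> \<beta>) \<gamma> x y =
      (\<Sum>z\<in>S. if x \<le> z \<and> z \<le> y then conv \<alpha> \<beta> x z * \<gamma> z y else 0)"
    by (rule conv_eq_sum[OF S]) (use col in auto)
  also have "\<dots> = (\<Sum>z\<in>S. \<Sum>w\<in>S. if x \<le> w \<and> w \<le> z \<and> z \<le> y then \<alpha> x w * \<beta> w z * \<gamma> z y else 0)"
  proof (rule sum.cong[OF refl])
    fix z
    show "(if x \<le> z \<and> z \<le> y then conv \<alpha> \<beta> x z * \<gamma> z y else 0) =
      (\<Sum>w\<in>S. if x \<le> w \<and> w \<le> z \<and> z \<le> y then \<alpha> x w * \<beta> w z * \<gamma> z y else 0)"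
    proof (cases "x \<le> z \<and> z \<le> y")
      case True
      have "conv \<alpha> \<beta> x z = (\<Sum>w\<in>S. if x \<le> w \<and> w \<le> z then \<alpha> x w * \<beta> w z else 0)"
        by (rule conv_eq_sum[OF S(1)]) (use True row order_trans in auto)
      then show ?thesis using True by (auto simp: sum_distrib_right intro!: sum.cong)
    next
      case False
      then show ?thesis by (auto intro!: sum.neutral dest: order_trans)
    qed
  qed
  finally show ?thesis .
qed

lemma conv_conv_right_double_sum:
  assumes S: "finite S" "x \<le> y"
    and row: "\<And>w. x \<le> w \<Longrightarrow> w \<le> y \<Longrightarrow> \<alpha> x w \<noteq> 0 \<Longrightarrow> w \<in> S"
    and col: "\<And>z. x \<le> z \<Longrightarrow> z \<le> y \<Longrightarrow> \<gamma> z y \<noteq> 0 \<Longrightarrow> z \<in> S"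
  shows "conv \<alpha> (conv \<beta> \<gamma>) x y =
    (\<Sum>w\<in>S. \<Sum>z\<in>S. if x \<le> w \<and> w \<le> z \<and> z \<le> y then \<alpha> x w * \<beta> w z * \<gamma> z y else 0)"
proof -
  have "conv \<alpha> (conv \<beta> \<gamma>) x y =
      (\<Sum>w\<in>S. if x \<le> w \<and> w \<le> y then \<alpha> x w * conv \<beta> \<gamma> w y else 0)"
    by (rule conv_eq_sum[OF S]) (use row in auto)
  also have "\<dots> = (\<Sum>w\<in>S. \<Sum>z\<in>S. if x \<le> w \<and> w \<le> z \<and> z \<le> y then \<alpha> x w * \<beta> w z * \<gamma> z y else 0)"
  proof (rule sum.cong[OF refl])
    fix w
    show "(if x \<le> w \<and> w \<le> y then \<alpha> x w * conv \<beta> \<gamma> w y else 0) =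
      (\<Sum>z\<in>S. if x \<le> w \<and> w \<le> z \<and> z \<le> y then \<alpha> x w * \<beta> w z * \<gamma> z y else 0)"
    proof (cases "x \<le> w \<and> w \<le> y")
      case True
      have "conv \<beta> \<gamma> w y = (\<Sum>z\<in>S. if w \<le> z \<and> z \<le> y then \<beta> w z * \<gamma> z y else 0)"
        by (rule conv_eq_sum[OF S(1)]) (use True col order_trans in auto)
      then show ?thesis using True by (auto simp: sum_distrib_left mult.assoc intro!: sum.cong)
    next
      case False
      then show ?thesis by (auto intro!: sum.neutral dest: order_trans)
    qed
  qed
  finally show ?thesis .
qed

lemma conv_assoc:
  assumes "\<alpha> \<in> FI" "\<gamma> \<in> FI"
  shows "conv (conv \<alpha> \<beta>) \<gamma> = conv \<alpha> (conv \<beta> \<gamma>)"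
proof (intro ext)
  fix x y
  show "conv (conv \<alpha> \<beta>) \<gamma> x y = conv \<alpha> (conv \<beta> \<gamma>) x y"
  proof (cases "x \<le> y")
    case False
    then show ?thesis by (simp add: conv_def)
  next
    case True
    define S where "S = insert x (support_points \<alpha> x y) \<union> insert y (support_points \<gamma> x y)"
    have S: "finite S" "x \<le> y"
      using True assms finite_support_points unfolding S_def by auto
    have row: "w \<in> S" if "x \<le> w" "w \<le> y" "\<alpha> x w \<noteq> 0" for w
      using row_in_support[of x w y \<alpha>] that unfolding S_def by blast
    have col: "z \<in> S" if "x \<le> z" "z \<le> y" "\<gamma> z y \<noteq> 0" for z
      using column_in_support[of x z y \<gamma>] that unfolding S_def by blast
    define t where "t w z = (if x \<le> w \<and> w \<le> z \<and> z \<le> y then \<alpha> x w * \<beta> w z * \<gamma> z y else 0)"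
      for w z
    have "conv (conv \<alpha> \<beta>) \<gamma> x y = (\<Sum>z\<in>S. \<Sum>w\<in>S. t w z)"
      unfolding t_def by (rule conv_conv_left_double_sum[OF S row col])
    also have "\<dots> = (\<Sum>w\<in>S. \<Sum>z\<in>S. t w z)"
      by (rule sum.swap)
    also have "\<dots> = conv \<alpha> (conv \<beta> \<gamma>) x y"
      unfolding t_def by (rule conv_conv_right_double_sum[OF S row col, symmetric])
    finally show ?thesis .
  qed
qed

lemma conv_add_right:
  assumes "\<alpha> \<in> FI"
  shows "conv \<alpha> (\<lambda>x y. \<beta> x y + \<gamma> x y) = (\<lambda>x y. conv \<alpha> \<beta> x y + conv \<alpha> \<gamma> x y)"
proof (intro ext)
  fix x y
  show "conv \<alpha> (\<lambda>x y. \<beta> x y + \<gamma> x y) x y = conv \<alpha> \<beta> x y + conv \<alpha> \<gamma> x y"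
  proof (cases "x \<le> y")
    case False
    then show ?thesis by (simp add: conv_def)
  next
    case xy: True
    define S where "S = insert x (support_points \<alpha> x y)"
    have S: "finite S" using assms finite_support_points unfolding S_def by blast
    have "conv \<alpha> \<delta> x y = (\<Sum>z\<in>S. if x \<le> z \<and> z \<le> y then \<alpha> x z * \<delta> z y else 0)" for \<delta>
      by (rule conv_eq_sum[OF S xy]) (use row_in_support[of x _ y \<alpha>] in \<open>auto simp: S_def\<close>)
    then show ?thesis by (auto simp: sum.distrib[symmetric] distrib_left intro!: sum.cong)
  qed
qed

lemma conv_add_left:
  assumes "\<gamma> \<in> FI"
  shows "conv (\<lambda>x y. \<alpha> x y + \<beta> x y) \<gamma> = (\<lambda>x y. conv \<alpha> \<gamma> x y + conv \<beta> \<gamma> x y)"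
proof (intro ext)
  fix x y
  show "conv (\<lambda>x y. \<alpha> x y + \<beta> x y) \<gamma> x y = conv \<alpha> \<gamma> x y + conv \<beta> \<gamma> x y"
  proof (cases "x \<le> y")
    case False
    then show ?thesis by (simp add: conv_def)
  next
    case xy: True
    define S where "S = insert y (support_points \<gamma> x y)"
    have S: "finite S" using assms finite_support_points unfolding S_def by blast
    have "conv \<delta> \<gamma> x y = (\<Sum>z\<in>S. if x \<le> z \<and> z \<le> y then \<delta> x z * \<gamma> z y else 0)" for \<delta>
      by (rule conv_eq_sum[OF S xy]) (use column_in_support[of x _ y \<gamma>] in \<open>auto simp: S_def\<close>)
    then show ?thesis by (auto simp: sum.distrib[symmetric] distrib_right intro!: sum.cong)
  qed
qed

lemma conv_delta_left:
  assumes "\<alpha> \<in> FI"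
  shows "conv delta \<alpha> = \<alpha>"
proof (intro ext)
  fix x y
  show "conv delta \<alpha> x y = \<alpha> x y"
  proof (cases "x \<le> y")
    case False
    then show ?thesis using assms by (simp add: conv_def FI_vanishes)
  next
    case True
    have "conv delta \<alpha> x y = (\<Sum>z\<in>{x}. if x \<le> z \<and> z \<le> y then delta x z * \<alpha> z y else 0)"
      by (rule conv_eq_sum[OF _ True]) (auto simp: delta_def split: if_splits)
    then show ?thesis using True by (simp add: delta_def)
  qed
qed

lemma conv_delta_right:
  assumes "\<alpha> \<in> FI"
  shows "conv \<alpha> delta = \<alpha>"
proof (intro ext)
  fix x y
  show "conv \<alpha> delta x y = \<alpha> x y"
  proof (cases "x \<le> y")
    case False
    then show ?thesis using assms by (simp add: conv_def FI_vanishes)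
  next
    case True
    have "conv \<alpha> delta x y = (\<Sum>z\<in>{y}. if x \<le> z \<and> z \<le> y then \<alpha> x z * delta z y else 0)"
      by (rule conv_eq_sum[OF _ True]) (auto simp: delta_def split: if_splits)
    then show ?thesis using True by (simp add: delta_def)
  qed
qed

lemma zero_FI: "(\<lambda>_ _. 0) \<in> FI"
  by (simp add: FI_def finitary_def)

lemma delta_FI: "delta \<in> FI"
  by (auto simp: FI_def finitary_def delta_def)

lemma add_FI:
  assumes "\<alpha> \<in> FI" "\<beta> \<in> FI"
  shows "(\<lambda>x y. \<alpha> x y + \<beta> x y) \<in> FI"
proof -
  have "finitary (\<lambda>x y. \<alpha> x y + \<beta> x y)"
  proof (rule finitaryI)
    fix x y :: 'a
    show "\<exists>A. finite A \<and> (\<forall>u v. x \<le> u \<and> u < v \<and> v \<le> y \<and> \<alpha> u v + \<beta> u v \<noteq> 0 \<longrightarrow> u \<in> A \<and> v \<in> A)"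
      using assms finite_support_points support_pointsI[of x _ _ y \<alpha>] support_pointsI[of x _ _ y \<beta>]
      by (intro exI[of _ "support_points \<alpha> x y \<union> support_points \<beta> x y"]) fastforce
  qed
  then show ?thesis using assms by (simp add: FI_def)
qed

lemma uminus_FI: "\<alpha> \<in> FI \<Longrightarrow> (\<lambda>x y. - \<alpha> x y) \<in> FI"
  by (simp add: FI_def finitary_def)

lemma diff_FI: "\<alpha> \<in> FI \<Longrightarrow> \<beta> \<in> FI \<Longrightarrow> (\<lambda>x y. \<alpha> x y - \<beta> x y) \<in> FI"
  using add_FI[of \<alpha> "\<lambda>x y. - \<beta> x y"] uminus_FI[of \<beta>] by simp


section \<open>The ring of finitary series\<close>

text \<open>Packaging FI as a type lets the generic ring library do the algebra.
  R is the representation as a function, Abs its inverse on FI.\<close>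

typedef (overloaded) ('p::order, 'k::field) fi = "FI :: ('p \<Rightarrow> 'p \<Rightarrow> 'k) set"
  morphisms R Abs
  using zero_FI by blast

setup_lifting type_definition_fi

instantiation fi :: (order, field) ring_1
begin

lift_definition zero_fi :: "('a, 'b) fi" is "\<lambda>_ _. 0" by (rule zero_FI)
lift_definition one_fi :: "('a, 'b) fi" is delta by (rule delta_FI)
lift_definition plus_fi :: "('a, 'b) fi \<Rightarrow> ('a, 'b) fi \<Rightarrow> ('a, 'b) fi"
  is "\<lambda>\<alpha> \<beta> x y. \<alpha> x y + \<beta> x y" by (rule add_FI)
lift_definition minus_fi :: "('a, 'b) fi \<Rightarrow> ('a, 'b) fi \<Rightarrow> ('a, 'b) fi"
  is "\<lambda>\<alpha> \<beta> x y. \<alpha> x y - \<beta> x y" by (rule diff_FI)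
lift_definition uminus_fi :: "('a, 'b) fi \<Rightarrow> ('a, 'b) fi" is "\<lambda>\<alpha> x y. - \<alpha> x y" by (rule uminus_FI)
lift_definition times_fi :: "('a, 'b) fi \<Rightarrow> ('a, 'b) fi \<Rightarrow> ('a, 'b) fi" is conv by (rule conv_FI)

instance
proof
  fix a b c :: "('a, 'b) fi"
  show "a + b + c = a + (b + c)" by transfer (simp add: add.assoc)
  show "a + b = b + a" by transfer (simp add: add.commute)
  show "0 + a = a" by transfer simp
  show "- a + a = 0" by transfer simp
  show "a - b = a + - b" by transfer simp
  show "a * b * c = a * (b * c)" by transfer (rule conv_assoc)
  show "(a + b) * c = a * c + b * c" by transfer (rule conv_add_left)
  show "a * (b + c) = a * b + a * c" by transfer (rule conv_add_right)
  show "1 * a = a" by transfer (rule conv_delta_left)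
  show "a * 1 = a" by transfer (rule conv_delta_right)
  show "(0::('a, 'b) fi) \<noteq> 1" by transfer (metis delta_def zero_neq_one)
qed

end

lemma FI_eq_range_R: "\<alpha> \<in> FI \<Longrightarrow> \<exists>A. \<alpha> = R A"
  using Abs_inverse by metis


section \<open>The diagonal\<close>

text \<open>Since products of diagonal entries involve only the diagonal, dg is a ring
  homomorphism into pointwise functions; this is what makes units and idempotents
  of fi visible on the diagonal.\<close>

lift_definition dg :: "('p::order, 'k::field) fi \<Rightarrow> 'p \<Rightarrow> 'k" is "\<lambda>\<alpha> x. \<alpha> x x" .

lift_definition diag_series :: "('p::order \<Rightarrow> 'k::field) \<Rightarrow> ('p, 'k) fi"
  is "\<lambda>d x y. if x = y then d x else 0"
  by (auto simp: FI_def finitary_def)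

lemma dg_mult [simp]: "dg (a * b) x = dg a x * dg b x"
  by transfer (rule conv_diag)

lemma dg_one [simp]: "dg 1 x = 1"
  by transfer (simp add: delta_def)

lemma dg_add [simp]: "dg (a + b) x = dg a x + dg b x"
  by transfer simp

lemma dg_diff [simp]: "dg (a - b) x = dg a x - dg b x"
  by transfer simp

lemma dg_diag_series [simp]: "dg (diag_series d) x = d x"
  by transfer simp

lemma diagonal_diag_series: "diagonal (R (diag_series d))"
  by (simp add: diagonal_def diag_series.rep_eq)

lemma diag_series_mult: "diag_series d * diag_series e = diag_series (\<lambda>x. d x * e x)"
proof (transfer, intro ext)
  fix d e :: "'a \<Rightarrow> 'b" and x y :: 'a
  show "conv (\<lambda>x y. if x = y then d x else 0) (\<lambda>x y. if x = y then e x else 0) x y =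
        (if x = y then d x * e x else 0)"
  proof (cases "x = y")
    case True
    then show ?thesis by (simp add: conv_diag)
  next
    case False
    then have "{z. x \<le> z \<and> z \<le> y \<and> (if x = z then d x else 0) * (if z = y then e z else 0) \<noteq> 0} = {}"
      by auto
    then show ?thesis using False by (simp add: conv_def)
  qed
qed


section \<open>Series with nonzero diagonal are invertible\<close>

text \<open>The right inverse b of a is determined by a b = \<delta>, i.e. for u < v
    b(u,v) = - a(u,u)\<inverse> \<Sum>{a(u,z) b(z,v) | u < z \<le> v}.
  The recursion descends along the finitely many nonzero entries of a in [u,v];
  we realise it with an explicit fuel parameter that becomes irrelevant once it
  exceeds the number of those entries.\<close>

fun inv_approx :: "nat \<Rightarrow> ('p::order \<Rightarrow> 'p \<Rightarrow> 'k::field) \<Rightarrow> 'p \<Rightarrow> 'p \<Rightarrow> 'k" where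
  "inv_approx 0 a u v = (if u = v then inverse (a u u) else 0)"
| "inv_approx (Suc n) a u v =
    (if u = v then inverse (a u u)
     else if u < v then
       - inverse (a u u) * (\<Sum>z\<in>{z. u < z \<and> z \<le> v \<and> a u z \<noteq> 0}. a u z * inv_approx n a z v)
     else 0)"

definition right_inv :: "('p::order \<Rightarrow> 'p \<Rightarrow> 'k::field) \<Rightarrow> 'p \<Rightarrow> 'p \<Rightarrow> 'k" where
  "right_inv a u v = inv_approx (Suc (card (nonzero_pairs a u v))) a u v"

lemma finite_row_successors:
  assumes "a \<in> FI"
  shows "finite {z. u < z \<and> z \<le> v \<and> a u z \<noteq> 0}"
proof -
  have "{z. u < z \<and> z \<le> v \<and> a u z \<noteq> 0} \<subseteq> snd ` nonzero_pairs a u v"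
    unfolding nonzero_pairs_def by (force simp: image_iff)
  then show ?thesis using finite_nonzero_pairs[OF assms] finite_subset by blast
qed

text \<open>Stepping along a nonzero entry a(u,z) with u < z strictly shrinks the set of
  nonzero entries in the interval; this is the termination measure.\<close>

lemma card_nonzero_pairs_decreases:
  assumes "a \<in> FI" "u < z" "z \<le> v" "a u z \<noteq> 0"
  shows "card (nonzero_pairs a z v) < card (nonzero_pairs a u v)"
proof (rule psubset_card_mono)
  show "finite (nonzero_pairs a u v)" by (rule finite_nonzero_pairs[OF assms(1)])
  have "nonzero_pairs a z v \<subseteq> nonzero_pairs a u v"
    using assms(2) unfolding nonzero_pairs_def by auto
  moreover have "(u, z) \<in> nonzero_pairs a u v" "(u, z) \<notin> nonzero_pairs a z v"
    using assms unfolding nonzero_pairs_def by auto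
  ultimately show "nonzero_pairs a z v \<subset> nonzero_pairs a u v" by blast
qed

lemma inv_approx_stable:
  assumes "a \<in> FI"
  shows "card (nonzero_pairs a u v) < n \<Longrightarrow> card (nonzero_pairs a u v) < m \<Longrightarrow>
    inv_approx n a u v = inv_approx m a u v"
proof (induction "card (nonzero_pairs a u v)" arbitrary: u n m rule: less_induct)
  case less
  obtain n' m' where nm: "n = Suc n'" "m = Suc m'"
    using less.prems by (cases n; cases m) auto
  have "inv_approx n' a z v = inv_approx m' a z v"
    if "u < z" "z \<le> v" "a u z \<noteq> 0" for z
  proof -
    have smaller: "card (nonzero_pairs a z v) < card (nonzero_pairs a u v)"
      using card_nonzero_pairs_decreases[OF assms that] .
    show ?thesis by (rule less.hyps[OF smaller]) (use smaller less.prems nm in auto)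
  qed
  then show ?case unfolding nm by (auto intro!: sum.cong)
qed

lemma right_inv_diag: "right_inv a u u = inverse (a u u)"
  by (simp add: right_inv_def)

lemma right_inv_vanishes: "\<not> u \<le> v \<Longrightarrow> right_inv a u v = 0"
  by (auto simp: right_inv_def)

lemma right_inv_rec:
  assumes "a \<in> FI" "u < v"
  shows "right_inv a u v =
    - inverse (a u u) * (\<Sum>z\<in>{z. u < z \<and> z \<le> v \<and> a u z \<noteq> 0}. a u z * right_inv a z v)"
proof -
  have "inv_approx (card (nonzero_pairs a u v)) a z v = right_inv a z v"
    if "u < z" "z \<le> v" "a u z \<noteq> 0" for z
    unfolding right_inv_def
    using card_nonzero_pairs_decreases[OF assms(1) that] by (intro inv_approx_stable[OF assms(1)]) auto
  then show ?thesis
    using assms(2) unfolding right_inv_def[of a u v] by (auto intro!: sum.cong)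
qed

text \<open>A nonzero off-diagonal entry of the inverse starts with a nonzero entry of a
  (by the recursion) and, by induction, also ends with one.  Hence its support
  inside [x,y] lies within that of a, and it is finitary.\<close>

lemma right_inv_first_step:
  assumes "a \<in> FI" "u < v" "right_inv a u v \<noteq> 0"
  obtains z where "u < z" "z \<le> v" "a u z \<noteq> 0" "right_inv a z v \<noteq> 0"
proof -
  have "(\<Sum>z\<in>{z. u < z \<and> z \<le> v \<and> a u z \<noteq> 0}. a u z * right_inv a z v) \<noteq> 0"
    using assms right_inv_rec[OF assms(1,2)] by auto
  then show ?thesis
    by (rule sum.not_neutral_contains_not_neutral) (auto intro: that)
qed

lemma right_inv_last_step:
  assumes "a \<in> FI"
  shows "u < v \<Longrightarrow> right_inv a u v \<noteq> 0 \<Longrightarrow> \<exists>s. u \<le> s \<and> s < v \<and> a s v \<noteq> 0"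
proof (induction "card (nonzero_pairs a u v)" arbitrary: u rule: less_induct)
  case less
  obtain z where z: "u < z" "z \<le> v" "a u z \<noteq> 0" "right_inv a z v \<noteq> 0"
    using right_inv_first_step[OF assms less.prems] .
  show ?case
  proof (cases "z = v")
    case True
    then show ?thesis using z less.prems(1) by blast
  next
    case False
    have "card (nonzero_pairs a z v) < card (nonzero_pairs a u v)"
      using card_nonzero_pairs_decreases[OF assms z(1-3)] .
    then obtain s where "z \<le> s" "s < v" "a s v \<noteq> 0"
      using less.hyps False z by (meson order.not_eq_order_implies_strict)
    then show ?thesis using z(1) by (meson order.trans order.strict_implies_order)
  qed
qed

lemma right_inv_FI:
  assumes "a \<in> FI"
  shows "right_inv a \<in> FI"
proof -
  have "finitary (right_inv a)"
  proof (rule finitaryI, intro exI conjI allI impI)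
    fix x y :: 'a
    show "finite (support_points a x y)" by (rule finite_support_points[OF assms])
    fix u v
    assume h: "x \<le> u \<and> u < v \<and> v \<le> y \<and> right_inv a u v \<noteq> 0"
    obtain z where z: "u < z" "z \<le> v" "a u z \<noteq> 0"
      using right_inv_first_step[OF assms] h by blast
    obtain s where s: "u \<le> s" "s < v" "a s v \<noteq> 0"
      using right_inv_last_step[OF assms] h by blast
    show "u \<in> support_points a x y"
      using support_pointsI[of x u z y a] h z order_trans by blast
    show "v \<in> support_points a x y"
      using support_pointsI[of x s v y a] h s order_trans by blast
  qed
  then show ?thesis by (simp add: FI_def right_inv_vanishes)
qed

lemma conv_right_inv:
  assumes "a \<in> FI" "\<And>x. a x x \<noteq> 0"
  shows "conv a (right_inv a) = delta"
proof (intro ext)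
  fix u v
  show "conv a (right_inv a) u v = delta u v"
  proof (cases "u < v")
    case False
    then show ?thesis
      using assms(2) by (cases "u = v") (auto simp: conv_diag right_inv_diag conv_def delta_def)
  next
    case lt: True
    define Z where "Z = {z. u < z \<and> z \<le> v \<and> a u z \<noteq> 0}"
    have Z: "finite Z" unfolding Z_def by (rule finite_row_successors[OF assms(1)])
    have "conv a (right_inv a) u v =
        (\<Sum>z\<in>insert u Z. if u \<le> z \<and> z \<le> v then a u z * right_inv a z v else 0)"
      by (rule conv_eq_sum) (use Z lt in \<open>auto simp: Z_def order.order_iff_strict\<close>)
    also have "\<dots> = a u u * right_inv a u v + (\<Sum>z\<in>Z. a u z * right_inv a z v)"
      using Z lt by (auto simp: Z_def intro!: sum.cong)
    also have "a u u * right_inv a u v = - (\<Sum>z\<in>Z. a u z * right_inv a z v)"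
      using right_inv_rec[OF assms(1) lt] assms(2)[of u] by (simp add: Z_def)
    finally show ?thesis using lt by (simp add: delta_def)
  qed
qed

lemma fi_right_inverse:
  fixes a :: "('p::order, 'k::field) fi"
  assumes nz: "\<And>x. dg a x \<noteq> 0"
  obtains b where "a * b = 1" "\<And>x. dg b x \<noteq> 0"
proof -
  have "R a \<in> FI" by (rule R)
  then have "right_inv (R a) \<in> FI" by (rule right_inv_FI)
  then obtain b where b: "R b = right_inv (R a)" using FI_eq_range_R by metis
  have "R (a * b) = R 1"
    unfolding times_fi.rep_eq one_fi.rep_eq b
    using \<open>R a \<in> FI\<close> nz by (intro conv_right_inv) (auto simp: dg.rep_eq)
  moreover have "dg b x \<noteq> 0" for x
    using nz[of x] by (simp add: dg.rep_eq b right_inv_diag)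
  ultimately show ?thesis using R_inject that by blast
qed

text \<open>The right inverse again has nonzero diagonal, so it is right invertible too,
  and the inverse is two-sided.\<close>

lemma has_inverse_if_dg_nonzero:
  fixes a :: "('p::order, 'k::field) fi"
  assumes "\<And>x. dg a x \<noteq> 0"
  shows "has_inverse a"
proof -
  obtain b where ab: "a * b = 1" and "\<And>x. dg b x \<noteq> 0" using fi_right_inverse assms by blast
  then obtain c where "b * c = 1" using fi_right_inverse by blast
  with ab show ?thesis by (rule has_inverse_if_right_inverses)
qed


section \<open>The decomposition in fi\<close>

lemma dg_idempotent:
  fixes f :: "('p::order, 'k::field) fi"
  assumes "f * f = f"
  shows "dg f x = 0 \<or> dg f x = 1"
proof -
  have "dg f x * dg f x = dg f x" using arg_cong[OF assms, of "\<lambda>m. dg m x"] by simp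
  then show ?thesis by (metis mult_cancel_left2 mult_eq_0_iff)
qed

lemma idempotent_conjugate_diagonal:
  fixes f :: "('p::order, 'k::field) fi"
  assumes "f * f = f"
  obtains v v' where "v * v' = 1" "v' * v = 1" "f = v * diag_series (dg f) * v'"
proof -
  define e where "e = diag_series (dg f)"
  define v where "v = f * e + (1 - f) * (1 - e)"
  have "e * e = e"
    unfolding e_def diag_series_mult by (metis dg_idempotent[OF assms] mult_1_left mult_zero_left)
  then have fv: "f * v = v * e" unfolding v_def by (rule idempotent_intertwiner[OF assms])
  have "dg v x \<noteq> 0" for x using dg_idempotent[OF assms, of x] by (auto simp: v_def e_def)
  then obtain v' where v': "v * v' = 1" "v' * v = 1"
    using has_inverse_if_dg_nonzero unfolding has_inverse_def by blast
  have "f = v * e * v'" using fv v' by (metis mult.assoc mult_1_right)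
  then show ?thesis using that v' unfolding e_def by blast
qed

text \<open>In the factorisation a = (a + 1 - x a)(x a) of a regular a, the first factor
  has diagonal entries a(p,p) if a(p,p) \<noteq> 0, and 1 otherwise; hence it is a unit.\<close>

lemma regular_cofactor_invertible:
  fixes a x :: "('p::order, 'k::field) fi"
  assumes "a * x * a = a"
  shows "has_inverse (a + 1 - x * a)"
proof (rule has_inverse_if_dg_nonzero)
  fix p
  have "dg a p * dg x p * dg a p = dg a p" using arg_cong[OF assms, of "\<lambda>m. dg m p"] by simp
  then show "dg (a + 1 - x * a) p \<noteq> 0"
    by (cases "dg a p = 0") (auto simp: mult.commute)
qed

lemma regular_decomposition:
  fixes a x :: "('p::order, 'k::field) fi"
  assumes "a * x * a = a"
  shows "\<exists>d b g. (\<forall>p. d p * d p = d p) \<and> has_inverse b \<and> has_inverse g \<and>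
    a = b * diag_series d * g"
proof -
  note idem = regular_idempotent[OF assms]
  obtain v v' where v: "v * v' = 1" "v' * v = 1"
    and xa: "x * a = v * diag_series (dg (x * a)) * v'"
    using idempotent_conjugate_diagonal[OF idem] by blast
  have "a = ((a + 1 - x * a) * v) * diag_series (dg (x * a)) * v'"
    using regular_factorisation[OF assms] xa by (metis mult.assoc)
  moreover have "has_inverse ((a + 1 - x * a) * v)" "has_inverse v'"
    using has_inverse_mult[OF regular_cofactor_invertible[OF assms]] v
    unfolding has_inverse_def by blast+
  moreover have "dg (x * a) p * dg (x * a) p = dg (x * a) p" for p
    using dg_idempotent[OF idem, of p] by auto
  ultimately show ?thesis by blast
qed


lemma conv_R: "conv (R a) (R b) = R (a * b)"
  by (simp add: times_fi.rep_eq)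

lemma conv_R_eq_delta: "conv (R a) (R b) = delta \<longleftrightarrow> a * b = 1"
  unfolding conv_R one_fi.rep_eq[symmetric] R_inject ..

lemma idempotent_FI_iff: "idempotent_FI (R e) \<longleftrightarrow> e * e = e"
  unfolding idempotent_FI_def conv_R R_inject ..

lemma invertible_FI_iff: "invertible_FI (R b) \<longleftrightarrow> has_inverse b"
  unfolding invertible_FI_def has_inverse_def
proof
  assume "R b \<in> FI \<and> (\<exists>\<beta>'\<in>FI. conv (R b) \<beta>' = delta \<and> conv \<beta>' (R b) = delta)"
  then obtain b' where "conv (R b) (R b') = delta" "conv (R b') (R b) = delta"
    using FI_eq_range_R by blast
  then show "\<exists>b'. b * b' = 1 \<and> b' * b = 1" unfolding conv_R_eq_delta by blast
next
  assume "\<exists>b'. b * b' = 1 \<and> b' * b = 1"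
  then obtain b' where "conv (R b) (R b') = delta" "conv (R b') (R b) = delta"
    unfolding conv_R_eq_delta by blast
  then show "R b \<in> FI \<and> (\<exists>\<beta>'\<in>FI. conv (R b) \<beta>' = delta \<and> conv \<beta>' (R b) = delta)"
    using R by blast
qed

lemma regular_FI_iff: "regular_FI (R a) \<longleftrightarrow> (\<exists>x. a * x * a = a)"
  unfolding regular_FI_def
proof
  assume "\<exists>\<chi>\<in>FI. conv (conv (R a) \<chi>) (R a) = R a"
  then obtain x where "conv (conv (R a) (R x)) (R a) = R a" using FI_eq_range_R by blast
  then show "\<exists>x. a * x * a = a" unfolding conv_R R_inject by blast
next
  assume "\<exists>x. a * x * a = a"
  then obtain x where "conv (conv (R a) (R x)) (R a) = R a" unfolding conv_R R_inject by blast
  then show "\<exists>\<chi>\<in>FI. conv (conv (R a) \<chi>) (R a) = R a" using R by blast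
qed

theorem theorem4:
  fixes \<alpha> :: "'p::order \<Rightarrow> 'p \<Rightarrow> 'k::field"
  assumes "\<alpha> \<in> FI"
  shows "regular_FI \<alpha> \<longleftrightarrow>
    (\<exists>\<epsilon> \<beta> \<gamma>. \<epsilon> \<in> FI \<and> diagonal \<epsilon> \<and> idempotent_FI \<epsilon> \<and>
       invertible_FI \<beta> \<and> invertible_FI \<gamma> \<and> \<alpha> = conv (conv \<beta> \<epsilon>) \<gamma>)"
    (is "_ \<longleftrightarrow> (\<exists>\<epsilon> \<beta> \<gamma>. ?decomposition \<epsilon> \<beta> \<gamma>)")
proof
  obtain a where a: "\<alpha> = R a" using FI_eq_range_R[OF assms] by blast
  {
    assume "regular_FI \<alpha>"
    then obtain x where "a * x * a = a" unfolding a regular_FI_iff by blast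
    then obtain d b g where d: "\<forall>p. d p * d p = d p"
      and "has_inverse b" "has_inverse g" "a = b * diag_series d * g"
      using regular_decomposition by blast
    moreover have "diag_series d * diag_series d = diag_series d"
      by (simp only: diag_series_mult d)
    ultimately have "?decomposition (R (diag_series d)) (R b) (R g)"
      by (simp add: a R diagonal_diag_series idempotent_FI_iff invertible_FI_iff conv_R)
    then show "\<exists>\<epsilon> \<beta> \<gamma>. ?decomposition \<epsilon> \<beta> \<gamma>" by blast
  }
  assume "\<exists>\<epsilon> \<beta> \<gamma>. ?decomposition \<epsilon> \<beta> \<gamma>"
  then obtain e b g where "?decomposition (R e) (R b) (R g)"
    using FI_eq_range_R invertible_FI_def by metis
  then have "e * e = e" "has_inverse b" "has_inverse g" "a = b * e * g"
    by (simp_all add: idempotent_FI_iff invertible_FI_iff a conv_R R_inject)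
  then show "regular_FI \<alpha>"
    unfolding a regular_FI_iff by (blast intro: regular_if_unit_idempotent_unit)
qed

end
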